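(* Let $n$ be an even positive integer and $m \ge 2$ an integer, and let $G$ be the Random Integer Generation game with $n$ players and $m$ strategies (defined in the context). Let $\bar{\sigma}$ be the mixed strategy profile with $\bar{\sigma}_i = (1/m, 1/m, \dots, 1/m)$ for every player $i$, i.e. each player chooses a strategy in $\{0,1,\dots,m-1\}$ uniformly at random. Then $\bar{\sigma}$ is the only Nash equilibrium of $G$, and moreover $\bar{\sigma}$ is an alliance-resistant Nash equilibrium.
   Context: A one-shot game with $n$ players consists of finite pure-strategy sets $S_1,\dots,S_n$ and utility functions $u_i : S_1\times\cdots\times S_n \to \mathbb{R}$; players choose simultaneously and independently. A mixed strategy for player $i$ is a probability distribution $\sigma_i$ on $S_i$; a mixed strategy profile is $\sigma=(\sigma_1,\dots,\sigma_n)$, and $u_i(\sigma)$ denotes the expected utility when each $s_i$ is drawn independently from $\sigma_i$. A profile $\sigma$ is a Nash equilibrium if for every player $i$ and every mixed strategy $\tilde\sigma_i$ of player $i$, $u_i(\sigma) \ge u_i(\tilde\sigma_i, \sigma_{-i})$. A profile $\sigma$ is an alliance-resistant Nash equilibrium if for every non-empty set $P$ of players and every choice of mixed strategies $\tilde\sigma_P$ for the members of $P$, $u_P(\sigma) \ge u_P(\tilde\sigma_P, \sigma_{-P})$, where $u_P$ is the sum of the utilities of the members of $P$. The Random Integer Generation (RIG) game with $n$ players ($n$ even) and $m\ge 2$ strategies: each player $i\in\{1,\dots,n\}$ has pure strategy set $S_i=\{0,1,\dots,m-1\}$. Players are paired as $(2k-1, 2k)$ for $k=1,\dots,n/2$.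 At outcome $s=(s_1,\dots,s_n)$, player $2k-1$ receives $u_{2k-1}(s)=f(s_{2k-1},s_{2k})$ and player $2k$ receives $u_{2k}(s) = -f(s_{2k-1},s_{2k})$, where $f(a,b)=1$ if $a-b\equiv 0 \pmod m$, $f(a,b)=-1$ if $a-b\equiv -1 \pmod m$, and $f(a,b)=0$ otherwise. *)

theory Defs
  imports Main "HOL-Library.FuncSet" Complex_Main
begin

definition pure_profiles :: "nat \<Rightarrow> nat \<Rightarrow> (nat \<Rightarrow> nat) set" where
  "pure_profiles n m = PiE {1..n} (\<lambda>_. {..<m})"

definition mixed_strategy :: "nat \<Rightarrow> (nat \<Rightarrow> real) \<Rightarrow> bool" where
  "mixed_strategy m p \<longleftrightarrow> (\<forall>s<m. 0 \<le> p s) \<and> (\<Sum>s<m. p s) = 1"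

definition mixed_profile :: "nat \<Rightarrow> nat \<Rightarrow> (nat \<Rightarrow> nat \<Rightarrow> real) \<Rightarrow> bool" where
  "mixed_profile n m \<sigma> \<longleftrightarrow> (\<forall>i\<in>{1..n}. mixed_strategy m (\<sigma> i))"

definition exp_utility ::
  "nat \<Rightarrow> nat \<Rightarrow> (nat \<Rightarrow> (nat \<Rightarrow> nat) \<Rightarrow> real) \<Rightarrow> (nat \<Rightarrow> nat \<Rightarrow> real) \<Rightarrow> nat \<Rightarrow> real" where
  "exp_utility n m u \<sigma> i = (\<Sum>s\<in>pure_profiles n m. (\<Prod>j\<in>{1..n}. \<sigma> j (s j)) * u i s)"

definition nash_equilibrium ::
  "nat \<Rightarrow> nat \<Rightarrow> (nat \<Rightarrow> (nat \<Rightarrow> nat) \<Rightarrow> real) \<Rightarrow> (nat \<Rightarrow> nat \<Rightarrow> real) \<Rightarrow> bool" where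
  "nash_equilibrium n m u \<sigma> \<longleftrightarrow> mixed_profile n m \<sigma> \<and>
     (\<forall>i\<in>{1..n}. \<forall>\<tau>. mixed_strategy m \<tau> \<longrightarrow>
        exp_utility n m u (\<sigma>(i := \<tau>)) i \<le> exp_utility n m u \<sigma> i)"

definition alliance_resistant_ne ::
  "nat \<Rightarrow> nat \<Rightarrow> (nat \<Rightarrow> (nat \<Rightarrow> nat) \<Rightarrow> real) \<Rightarrow> (nat \<Rightarrow> nat \<Rightarrow> real) \<Rightarrow> bool" where
  "alliance_resistant_ne n m u \<sigma> \<longleftrightarrow> mixed_profile n m \<sigma> \<and>
     (\<forall>P. P \<subseteq> {1..n} \<longrightarrow> P \<noteq> {} \<longrightarrow> (\<forall>\<tau>. (\<forall>i\<in>P. mixed_strategy m (\<tau> i)) \<longrightarrow>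
        (\<Sum>i\<in>P. exp_utility n m u (\<lambda>j. if j \<in> P then \<tau> j else \<sigma> j) i)
          \<le> (\<Sum>i\<in>P. exp_utility n m u \<sigma> i)))"

definition rig_f :: "nat \<Rightarrow> nat \<Rightarrow> nat \<Rightarrow> real" where
  "rig_f m a b = (if (int a - int b) mod int m = 0 then 1
                  else if (int a - int b) mod int m = (-1) mod int m then -1 else 0)"

definition rig_utility :: "nat \<Rightarrow> nat \<Rightarrow> (nat \<Rightarrow> nat) \<Rightarrow> real" where
  "rig_utility m i s = (if odd i then rig_f m (s i) (s (i + 1))
                        else - rig_f m (s (i - 1)) (s i))"

end

theory Submission
  imports Defs
begin

text \<open>
  For partners playing x and y, the first one's expected payoff is the bilinear form
  B(x, y) = \<Sum>a. x(a) (y(a) - y(a + 1)) = \<Sum>b. y(b) (x(b) - x(b - 1)), indices mod m;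
  the other players' strategies sum out. Hence B vanishes as soon as one side is uniform.
  Against the uniform profile every coalition therefore earns 0: a member whose partner stays
  outside faces a uniform opponent, and pairs inside the coalition cancel because each pair plays
  a zero-sum game. Conversely, at an equilibrium with value v = B(x, y) the pure deviations give
  y(a) - y(a + 1) \<le> v and x(a) - x(a + 1) \<le> -v for all a. Summed around the cycle the
  left-hand sides vanish, so v = 0, and then x and y are non-decreasing around the cycle, hence
  constant.
\<close>

lemma sum_PiE_prod_fix_two_coords:
  fixes \<sigma> :: "'i \<Rightarrow> 'a \<Rightarrow> 'b::comm_semiring_1"
  assumes "finite I" and "i \<in> I" "k \<in> I" "i \<noteq> k" and "a \<in> A i" "b \<in> A k"
    and fin: "\<And>j. j \<in> I \<Longrightarrow> finite (A j)"
    and sum1: "\<And>j. j \<in> I - {i, k} \<Longrightarrow> sum (\<sigma> j) (A j) = 1"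
  shows "(\<Sum>s | s \<in> PiE I A \<and> s i = a \<and> s k = b. \<Prod>j\<in>I. \<sigma> j (s j)) = \<sigma> i a * \<sigma> k b"
proof -
  \<comment> \<open>F forces coordinates i and k to a and b, so that the sum factorises by prod_sum_PiE.\<close>
  define F where "F j t = (if (j = i \<longrightarrow> t = a) \<and> (j = k \<longrightarrow> t = b) then \<sigma> j t else 0)" for j t
  have F: "(if s i = a \<and> s k = b then \<Prod>j\<in>I. \<sigma> j (s j) else 0) = (\<Prod>j\<in>I. F j (s j))" for s
  proof (cases "s i = a \<and> s k = b")
    case False
    then have "(\<Prod>j\<in>I. F j (s j)) = 0"
      using assms(1-3) by (intro prod_zero) (auto simp: F_def)
    with False show ?thesis
      by (simp only: if_False)
  qed (auto simp: F_def intro!: prod.cong)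
  have "(\<Sum>s | s \<in> PiE I A \<and> s i = a \<and> s k = b. \<Prod>j\<in>I. \<sigma> j (s j))
      = (\<Sum>s\<in>PiE I A. if s i = a \<and> s k = b then \<Prod>j\<in>I. \<sigma> j (s j) else 0)"
    using assms(1) fin by (intro sum.inter_filter) (simp add: finite_PiE)
  also have "\<dots> = (\<Prod>j\<in>I. \<Sum>t\<in>A j. F j t)"
    using assms(1) fin by (simp only: F prod_sum_PiE)
  also have "\<dots> = (\<Sum>t\<in>A i. F i t) * ((\<Sum>t\<in>A k. F k t) * (\<Prod>j\<in>I - {i} - {k}. \<Sum>t\<in>A j. F j t))"
    using assms(1-4) by (simp add: prod.remove[of I i] prod.remove[of "I - {i}" k])
  also have "\<dots> = \<sigma> i a * \<sigma> k b"
    using assms(4-6) fin[OF assms(2)] fin[OF assms(3)] sum1 by (simp add: F_def)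
  finally show ?thesis .
qed

lemma sum_PiE_prod_mult_two_coords:
  fixes \<sigma> :: "'i \<Rightarrow> 'a \<Rightarrow> 'b::comm_semiring_1"
  assumes "finite I" and "i \<in> I" "k \<in> I" "i \<noteq> k"
    and fin: "\<And>j. j \<in> I \<Longrightarrow> finite (A j)"
    and sum1: "\<And>j. j \<in> I - {i, k} \<Longrightarrow> sum (\<sigma> j) (A j) = 1"
  shows "(\<Sum>s\<in>PiE I A. (\<Prod>j\<in>I. \<sigma> j (s j)) * g (s i) (s k))
       = (\<Sum>a\<in>A i. \<Sum>b\<in>A k. \<sigma> i a * \<sigma> k b * g a b)"
proof -
  let ?P = "\<lambda>s. \<Prod>j\<in>I. \<sigma> j (s j)"
  have "(\<Sum>s\<in>PiE I A. ?P s * g (s i) (s k))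
      = (\<Sum>p\<in>A i \<times> A k. \<Sum>s | s \<in> PiE I A \<and> (s i, s k) = p. ?P s * g (s i) (s k))"
    using assms(1-3) fin by (intro sum.group[symmetric]) (auto simp: finite_PiE PiE_mem)
  also have "\<dots> = (\<Sum>(a, b)\<in>A i \<times> A k. g a b * (\<Sum>s | s \<in> PiE I A \<and> s i = a \<and> s k = b. ?P s))"
    by (intro sum.cong refl) (auto simp: sum_distrib_left mult.commute intro!: sum.cong)
  also have "\<dots> = (\<Sum>a\<in>A i. \<Sum>b\<in>A k. \<sigma> i a * \<sigma> k b * g a b)"
    unfolding sum.cartesian_product[symmetric]
    by (intro sum.cong refl) (subst sum_PiE_prod_fix_two_coords[OF assms(1-4) _ _ fin sum1]; simp add: mult.commute)
  finally show ?thesis .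
qed

definition succ_mod :: "nat \<Rightarrow> nat \<Rightarrow> nat" where
  "succ_mod m a = Suc a mod m"

definition pred_mod :: "nat \<Rightarrow> nat \<Rightarrow> nat" where
  "pred_mod m b = (if b = 0 then m - 1 else b - 1)"

lemma succ_mod_eq: "a < m \<Longrightarrow> succ_mod m a = (if Suc a = m then 0 else Suc a)"
  unfolding succ_mod_def by auto

lemma succ_mod_lt: "a < m \<Longrightarrow> succ_mod m a < m"
  by (simp add: succ_mod_eq)

lemma pred_mod_lt: "b < m \<Longrightarrow> pred_mod m b < m"
  unfolding pred_mod_def by auto

lemma pred_mod_succ_mod: "a < m \<Longrightarrow> pred_mod m (succ_mod m a) = a"
  unfolding pred_mod_def by (auto simp: succ_mod_eq)

lemma succ_mod_pred_mod: "b < m \<Longrightarrow> succ_mod m (pred_mod m b) = b"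
  unfolding pred_mod_def by (auto simp: succ_mod_eq)

lemma succ_mod_eq_iff_pred_mod: "a < m \<Longrightarrow> b < m \<Longrightarrow> b = succ_mod m a \<longleftrightarrow> a = pred_mod m b"
  using pred_mod_succ_mod succ_mod_pred_mod by metis

lemma bij_betw_succ_mod: "bij_betw (succ_mod m) {..<m} {..<m}"
  by (rule bij_betw_byWitness[where f' = "pred_mod m"])
     (auto simp: succ_mod_lt pred_mod_lt succ_mod_pred_mod pred_mod_succ_mod)

lemma sum_succ_mod: "(\<Sum>a<m. f (succ_mod m a)) = (\<Sum>a<m. f a)"
  using bij_betw_succ_mod by (rule sum.reindex_bij_betw)

lemma cyclically_mono_imp_const:
  fixes z :: "nat \<Rightarrow> real"
  assumes mono: "\<And>a. a < m \<Longrightarrow> z a \<le> z (succ_mod m a)" and "a < m"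
  shows "z a = z 0"
proof -
  have "(\<Sum>a<m. z (succ_mod m a) - z a) = 0"
    by (simp add: sum_subtractf sum_succ_mod)
  then have step: "z (succ_mod m a) = z a" if "a < m" for a
    using that mono by (subst (asm) sum_nonneg_eq_0_iff) auto
  show ?thesis
    using \<open>a < m\<close>
  proof (induction a)
    case (Suc a)
    then show ?case
      using step[of a] by (simp add: succ_mod_eq)
  qed simp
qed

lemma mixed_strategy_uniform_if_cyclically_mono:
  assumes "mixed_strategy m z" and "\<And>a. a < m \<Longrightarrow> z a \<le> z (succ_mod m a)" and "s < m"
  shows "z s = 1 / real m"
proof -
  have const: "z a = z 0" if "a < m" for a
    using cyclically_mono_imp_const[of m z, OF assms(2) that] .
  have "1 = (\<Sum>a<m. z a)"
    using assms(1) by (simp add: mixed_strategy_def)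
  also have "\<dots> = (\<Sum>a<m. z 0)"
    by (rule sum.cong) (auto intro: const)
  finally show ?thesis
    using const[OF assms(3)] assms(3) by (simp add: field_simps)
qed

lemma cyclic_difference_bound_nonneg:
  fixes z :: "nat \<Rightarrow> real"
  assumes "0 < m" and "\<And>a. a < m \<Longrightarrow> z a - z (succ_mod m a) \<le> c"
  shows "0 \<le> c"
proof -
  have "0 = (\<Sum>a<m. z a - z (succ_mod m a))"
    by (simp add: sum_subtractf sum_succ_mod)
  also have "\<dots> \<le> real m * c"
    using sum_mono[of "{..<m}", OF assms(2)] by simp
  finally show ?thesis
    using assms(1) by (simp add: zero_le_mult_iff)
qed

lemma rig_f_eq:
  assumes "2 \<le> m" "a < m" "b < m"
  shows "rig_f m a b = (if b = a then 1 else if b = succ_mod m a then -1 else 0)"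
proof -
  have "(int a - int b) mod int m = (if b \<le> a then int a - int b else int a - int b + int m)"
  proof (cases "b \<le> a")
    case False
    have "(int a - int b) mod int m = (int a - int b + int m) mod int m"
      by simp
    also have "\<dots> = int a - int b + int m"
      using False assms(2,3) by (intro mod_pos_pos_trivial) auto
    finally show ?thesis
      using False by simp
  qed (use assms in simp)
  moreover have "(-1) mod int m = int m - 1"
    using assms(1) by (simp add: zmod_minus1)
  ultimately show ?thesis
    using assms unfolding rig_f_def by (auto simp: succ_mod_eq)
qed

lemma sum_mult_rig_f_row:
  assumes "2 \<le> m" "a < m"
  shows "(\<Sum>b<m. y b * rig_f m a b) = y a - y (succ_mod m a)"
proof -
  have "succ_mod m a \<noteq> a"
    using assms by (simp add: succ_mod_eq)
  then have "(\<Sum>b<m. y b * rig_f m a b)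
      = (\<Sum>b<m. (if b = a then y b else 0) - (if b = succ_mod m a then y b else 0))"
    using assms by (intro sum.cong refl) (simp add: rig_f_eq)
  then show ?thesis
    using assms by (simp add: sum_subtractf succ_mod_lt)
qed

lemma sum_mult_rig_f_col:
  assumes "2 \<le> m" "b < m"
  shows "(\<Sum>a<m. x a * rig_f m a b) = x b - x (pred_mod m b)"
proof -
  have "pred_mod m b \<noteq> b"
    using assms by (auto simp: pred_mod_def)
  then have "(\<Sum>a<m. x a * rig_f m a b)
      = (\<Sum>a<m. (if a = b then x a else 0) - (if a = pred_mod m b then x a else 0))"
    using assms by (intro sum.cong refl) (auto simp: rig_f_eq succ_mod_eq_iff_pred_mod)
  then show ?thesis
    using assms by (simp add: sum_subtractf pred_mod_lt)
qed

definition rig_payoff :: "nat \<Rightarrow> (nat \<Rightarrow> real) \<Rightarrow> (nat \<Rightarrow> real) \<Rightarrow> real" where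
  "rig_payoff m x y = (\<Sum>a<m. \<Sum>b<m. x a * y b * rig_f m a b)"

lemma rig_payoff_eq_row_sum:
  "2 \<le> m \<Longrightarrow> rig_payoff m x y = (\<Sum>a<m. x a * (y a - y (succ_mod m a)))"
  unfolding rig_payoff_def
  by (intro sum.cong refl) (simp add: sum_mult_rig_f_row[symmetric] sum_distrib_left mult_ac)

lemma rig_payoff_eq_col_sum:
  "2 \<le> m \<Longrightarrow> rig_payoff m x y = (\<Sum>b<m. y b * (x b - x (pred_mod m b)))"
  unfolding rig_payoff_def
  by (subst sum.swap)
    (intro sum.cong refl, simp add: sum_mult_rig_f_col[symmetric] sum_distrib_left mult_ac)

lemma rig_payoff_const_left: "2 \<le> m \<Longrightarrow> rig_payoff m (\<lambda>_. c) y = 0"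
  by (simp add: rig_payoff_eq_col_sum)

lemma rig_payoff_const_right: "2 \<le> m \<Longrightarrow> rig_payoff m x (\<lambda>_. c) = 0"
  by (simp add: rig_payoff_eq_row_sum)

definition pure_strategy :: "nat \<Rightarrow> nat \<Rightarrow> real" where
  "pure_strategy a t = of_bool (t = a)"

lemma mixed_strategy_pure_strategy: "a < m \<Longrightarrow> mixed_strategy m (pure_strategy a)"
  unfolding mixed_strategy_def pure_strategy_def by simp

lemma rig_payoff_pure_left:
  "2 \<le> m \<Longrightarrow> a < m \<Longrightarrow> rig_payoff m (pure_strategy a) y = y a - y (succ_mod m a)"
  by (simp add: rig_payoff_eq_row_sum pure_strategy_def)

lemma rig_payoff_pure_right:
  "2 \<le> m \<Longrightarrow> b < m \<Longrightarrow> rig_payoff m x (pure_strategy b) = x b - x (pred_mod m b)"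
  by (simp add: rig_payoff_eq_col_sum pure_strategy_def)

lemma alliance_resistant_imp_nash_equilibrium:
  assumes "alliance_resistant_ne n m u \<sigma>"
  shows "nash_equilibrium n m u \<sigma>"
  unfolding nash_equilibrium_def
proof (intro conjI ballI allI impI)
  show "mixed_profile n m \<sigma>"
    using assms by (simp add: alliance_resistant_ne_def)
  fix i \<tau> assume "i \<in> {1..n}" "mixed_strategy m \<tau>"
  moreover have "(\<lambda>j. if j \<in> {i} then \<tau> else \<sigma> j) = \<sigma>(i := \<tau>)"
    by auto
  ultimately show "exp_utility n m u (\<sigma>(i := \<tau>)) i \<le> exp_utility n m u \<sigma> i"
    using assms unfolding alliance_resistant_ne_def
    by (auto dest!: spec[of _ "{i}"] spec[of _ "\<lambda>_. \<tau>"])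
qed

lemma sum_eq_0_by_sign_reversing_involution:
  fixes f :: "'a \<Rightarrow> 'b::linordered_ab_group_add"
  assumes "\<And>i. i \<in> Q \<Longrightarrow> p i \<in> Q" "\<And>i. i \<in> Q \<Longrightarrow> p (p i) = i"
    and "\<And>i. i \<in> Q \<Longrightarrow> f (p i) = - f i"
  shows "sum f Q = 0"
proof -
  have "bij_betw p Q Q"
    using assms(1,2) by (intro bij_betw_byWitness[where f' = p]) auto
  then have "sum f Q = sum (f \<circ> p) Q"
    by (simp add: sum.reindex_bij_betw)
  also have "\<dots> = - sum f Q"
    using assms(3) by (simp add: sum_negf)
  finally show ?thesis
    by simp
qed

definition partner :: "nat \<Rightarrow> nat" where
  "partner i = (if odd i then i + 1 else i - 1)"

lemma partner_partner: "1 \<le> i \<Longrightarrow> partner (partner i) = i"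
  unfolding partner_def by (auto elim!: evenE oddE)

lemma exp_utility_rig_odd:
  assumes "mixed_profile n m \<sigma>" "even n" "i \<in> {1..n}" "odd i"
  shows "exp_utility n m (rig_utility m) \<sigma> i = rig_payoff m (\<sigma> i) (\<sigma> (i + 1))"
proof -
  have "i + 1 \<in> {1..n}"
    using assms(2-4) by simp presburger
  then have "(\<Sum>s\<in>pure_profiles n m. (\<Prod>j\<in>{1..n}. \<sigma> j (s j)) * rig_f m (s i) (s (i + 1)))
      = rig_payoff m (\<sigma> i) (\<sigma> (i + 1))"
    using assms(1,3) unfolding pure_profiles_def rig_payoff_def
    by (subst sum_PiE_prod_mult_two_coords) (auto simp: mixed_profile_def mixed_strategy_def)
  then show ?thesis
    using assms(4) by (simp add: exp_utility_def rig_utility_def)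
qed

lemma exp_utility_rig_even:
  assumes "mixed_profile n m \<sigma>" "i \<in> {1..n}" "even i"
  shows "exp_utility n m (rig_utility m) \<sigma> i = - rig_payoff m (\<sigma> (i - 1)) (\<sigma> i)"
proof -
  have "i - 1 \<in> {1..n}" "i - 1 \<noteq> i"
    using assms(2,3) by (auto elim!: evenE)
  then have "(\<Sum>s\<in>pure_profiles n m. (\<Prod>j\<in>{1..n}. \<sigma> j (s j)) * rig_f m (s (i - 1)) (s i))
      = rig_payoff m (\<sigma> (i - 1)) (\<sigma> i)"
    using assms(1,2) unfolding pure_profiles_def rig_payoff_def
    by (subst sum_PiE_prod_mult_two_coords) (auto simp: mixed_profile_def mixed_strategy_def)
  then show ?thesis
    using assms(3) by (simp add: exp_utility_def rig_utility_def sum_negf)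
qed

lemma exp_utility_rig_partner:
  assumes "1 \<le> i"
  shows "exp_utility n m (rig_utility m) \<sigma> (partner i) = - exp_utility n m (rig_utility m) \<sigma> i"
proof -
  have "rig_utility m (partner i) s = - rig_utility m i s" for s
    using assms unfolding partner_def rig_utility_def by (auto elim!: evenE oddE)
  then show ?thesis
    by (simp add: exp_utility_def sum_negf)
qed

lemma exp_utility_rig_partner_const:
  assumes "mixed_profile n m \<sigma>" "even n" "2 \<le> m" "i \<in> {1..n}" and "\<sigma> (partner i) = (\<lambda>_. c)"
  shows "exp_utility n m (rig_utility m) \<sigma> i = 0"
proof (cases "odd i")
  case True
  then show ?thesis
    using assms by (simp add: exp_utility_rig_odd partner_def rig_payoff_const_right)
next
  case False
  then show ?thesis
    using assms by (simp add: exp_utility_rig_even partner_def rig_payoff_const_left)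
qed

lemma mixed_profile_uniform: "1 \<le> m \<Longrightarrow> mixed_profile n m (\<lambda>i s. 1 / real m)"
  by (simp add: mixed_profile_def mixed_strategy_def)

lemma rig_uniform_alliance_resistant:
  assumes "even n" "2 \<le> m"
  shows "alliance_resistant_ne n m (rig_utility m) (\<lambda>i s. 1 / real m)"
  unfolding alliance_resistant_ne_def
proof (intro conjI allI impI)
  let ?U = "\<lambda>(i::nat) (s::nat). 1 / real m"
  let ?u = "exp_utility n m (rig_utility m)"
  show "mixed_profile n m ?U"
    using assms(2) by (simp add: mixed_profile_uniform)
  fix P :: "nat set" and \<tau> assume P: "P \<subseteq> {1..n}" "P \<noteq> {}" and \<tau>: "\<forall>i\<in>P. mixed_strategy m (\<tau> i)"
  define \<rho> where "\<rho> = (\<lambda>j. if j \<in> P then \<tau> j else ?U j)"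
  have \<rho>: "mixed_profile n m \<rho>"
    using \<tau> assms(2) by (simp add: \<rho>_def mixed_profile_def mixed_strategy_def)
  have U0: "?u ?U i = 0" if "i \<in> {1..n}" for i
    using exp_utility_rig_partner_const[OF \<open>mixed_profile n m ?U\<close> assms that] by simp
  define Q where "Q = {i \<in> P. partner i \<in> P}"
  have "(\<Sum>i\<in>P. ?u \<rho> i) = (\<Sum>i\<in>Q. ?u \<rho> i)"
  proof (rule sum.mono_neutral_right)
    show "finite P"
      using P(1) finite_subset by blast
    show "\<forall>i\<in>P - Q. ?u \<rho> i = 0"
    proof
      fix i assume "i \<in> P - Q"
      then have "i \<in> {1..n}" "\<rho> (partner i) = (\<lambda>_. 1 / real m)"
        using P(1) by (auto simp: Q_def \<rho>_def)
      then show "?u \<rho> i = 0"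
        by (rule exp_utility_rig_partner_const[OF \<rho> assms])
    qed
  qed (auto simp: Q_def)
  also have "\<dots> = 0"
    using P(1) by (intro sum_eq_0_by_sign_reversing_involution[where p = partner])
      (auto simp: Q_def partner_partner exp_utility_rig_partner)
  also have "\<dots> = (\<Sum>i\<in>P. ?u ?U i)"
    using P(1) U0 by (simp add: subset_iff)
  finally show "(\<Sum>i\<in>P. ?u \<rho> i) \<le> (\<Sum>i\<in>P. ?u ?U i)"
    by simp
qed

lemma rig_nash_equilibrium_pair_uniform:
  assumes ne: "nash_equilibrium n m (rig_utility m) \<sigma>"
    and "even n" "2 \<le> m" "q \<in> {1..n}" "odd q" and "s < m"
  shows "\<sigma> q s = 1 / real m \<and> \<sigma> (q + 1) s = 1 / real m"
proof -
  let ?u = "exp_utility n m (rig_utility m)"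
  define x where "x = \<sigma> q"
  define y where "y = \<sigma> (q + 1)"
  define v where "v = rig_payoff m x y"
  have \<sigma>: "mixed_profile n m \<sigma>"
    and dev: "\<And>j \<tau>. j \<in> {1..n} \<Longrightarrow> mixed_strategy m \<tau> \<Longrightarrow> ?u (\<sigma>(j := \<tau>)) j \<le> ?u \<sigma> j"
    using ne by (auto simp: nash_equilibrium_def)
  have \<sigma>_upd: "mixed_profile n m (\<sigma>(j := \<tau>))" if "mixed_strategy m \<tau>" for j \<tau>
    using \<sigma> that by (simp add: mixed_profile_def)
  have q1: "q + 1 \<in> {1..n}" "even (q + 1)"
    using assms(2,4,5) by simp_all presburger
  have y_dev: "y a - y (succ_mod m a) \<le> v" if "a < m" for a
  proof -
    have "y a - y (succ_mod m a) = ?u (\<sigma>(q := pure_strategy a)) q"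
      using that assms(2-5) by (simp add: exp_utility_rig_odd \<sigma>_upd mixed_strategy_pure_strategy
          rig_payoff_pure_left y_def)
    also have "\<dots> \<le> v"
      using dev[OF assms(4) mixed_strategy_pure_strategy[OF that]] assms(2,4,5)
      by (simp add: exp_utility_rig_odd \<sigma> v_def x_def y_def)
    finally show ?thesis .
  qed
  have x_dev: "x a - x (succ_mod m a) \<le> - v" if "a < m" for a
  proof -
    have b: "succ_mod m a < m" "pred_mod m (succ_mod m a) = a"
      using that by (simp_all add: succ_mod_lt pred_mod_succ_mod)
    have "x a - x (succ_mod m a) = ?u (\<sigma>(q + 1 := pure_strategy (succ_mod m a))) (q + 1)"
      using b q1 assms(3) by (simp add: exp_utility_rig_even \<sigma>_upd mixed_strategy_pure_strategy
          rig_payoff_pure_right x_def)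
    also have "\<dots> \<le> - v"
      using dev[OF q1(1) mixed_strategy_pure_strategy[OF b(1)]] q1
      by (simp add: exp_utility_rig_even \<sigma> v_def x_def y_def)
    finally show ?thesis .
  qed
  have "0 < m"
    using assms(3) by simp
  have "v = 0"
    using cyclic_difference_bound_nonneg[of m y v, OF \<open>0 < m\<close> y_dev]
      cyclic_difference_bound_nonneg[of m x "- v", OF \<open>0 < m\<close> x_dev] by simp
  then have x_mono: "x a \<le> x (succ_mod m a)" and y_mono: "y a \<le> y (succ_mod m a)" if "a < m" for a
    using x_dev[OF that] y_dev[OF that] by simp_all
  have "mixed_strategy m x" "mixed_strategy m y"
    using \<sigma> assms(4) q1(1) by (simp_all add: mixed_profile_def x_def y_def)
  then show ?thesis
    using mixed_strategy_uniform_if_cyclically_mono[of m x, OF _ x_mono assms(6)]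
      mixed_strategy_uniform_if_cyclically_mono[of m y, OF _ y_mono assms(6)]
    by (simp add: x_def y_def)
qed

theorem mainTheorem1:
  fixes n m :: nat
  assumes "even n" and "0 < n" and "2 \<le> m"
  shows "nash_equilibrium n m (rig_utility m) (\<lambda>i s. 1 / real m)
       \<and> (\<forall>\<sigma>. nash_equilibrium n m (rig_utility m) \<sigma> \<longrightarrow>
             (\<forall>i\<in>{1..n}. \<forall>s<m. \<sigma> i s = 1 / real m))
       \<and> alliance_resistant_ne n m (rig_utility m) (\<lambda>i s. 1 / real m)"
proof (intro conjI allI impI ballI)
  show "alliance_resistant_ne n m (rig_utility m) (\<lambda>i s. 1 / real m)"
    using assms(1,3) by (rule rig_uniform_alliance_resistant)
  then show "nash_equilibrium n m (rig_utility m) (\<lambda>i s. 1 / real m)"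
    by (rule alliance_resistant_imp_nash_equilibrium)
  fix \<sigma> i s
  assume "nash_equilibrium n m (rig_utility m) \<sigma>" "i \<in> {1..n}" "s < m"
  define q where "q = (if odd i then i else i - 1)"
  have "q \<in> {1..n}" "odd q" "i = q \<or> i = q + 1"
    using \<open>i \<in> {1..n}\<close> unfolding q_def by (cases "odd i"; simp; presburger)+
  with rig_nash_equilibrium_pair_uniform[OF \<open>nash_equilibrium n m (rig_utility m) \<sigma>\<close> assms(1,3)]
  show "\<sigma> i s = 1 / real m"
    using \<open>s < m\<close> by blast
qed

end
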